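(* Let $U$ be a finite nonempty set, $R$ an equivalence relation on $U$, and $M(R)$ the support matroid induced by $R$. For every $X\subseteq U$, $X$ is a closed set of $M(R)$ if and only if $R^{*}(X)=R_{*}(X)$.
   Context: For $x\in U$, $RN(x)=\{y\in U\mid xRy\}$; $R_{*}(X)=\{x\in U\mid RN(x)\subseteq X\}$ and $R^{*}(X)=\{x\in U\mid RN(x)\cap X\neq\emptyset\}$. Let $\mathbf{S}(R)=\{X\subseteq U\mid R^{*}(X)=U\}$. The support matroid $M(R)=(U,\mathbf{I}(R))$ is the matroid on $U$ whose independent sets $\mathbf{I}(R)$ are the subsets of inclusion-minimal members of $\mathbf{S}(R)$. For a matroid $(U,\mathbf{I})$, the rank is $r(X)=\max\{|I|\mid I\subseteq X, I\in\mathbf{I}\}$, the closure is $cl(X)=\{e\in U\mid r(X)=r(X\cup\{e\})\}$, and $X$ is closed if $cl(X)=X$. *)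

theory Defs
  imports Main
begin

definition RN :: "'a set \<Rightarrow> ('a \<times> 'a) set \<Rightarrow> 'a \<Rightarrow> 'a set" where
  "RN U R x = {y \<in> U. (x, y) \<in> R}"

definition lower_appr :: "'a set \<Rightarrow> ('a \<times> 'a) set \<Rightarrow> 'a set \<Rightarrow> 'a set" where
  "lower_appr U R X = {x \<in> U. RN U R x \<subseteq> X}"

definition upper_appr :: "'a set \<Rightarrow> ('a \<times> 'a) set \<Rightarrow> 'a set \<Rightarrow> 'a set" where
  "upper_appr U R X = {x \<in> U. RN U R x \<inter> X \<noteq> {}}"

definition support_sets :: "'a set \<Rightarrow> ('a \<times> 'a) set \<Rightarrow> 'a set set" where
  "support_sets U R = {X. X \<subseteq> U \<and> upper_appr U R X = U}"

definition minimal_support_sets :: "'a set \<Rightarrow> ('a \<times> 'a) set \<Rightarrow> 'a set set" where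
  "minimal_support_sets U R =
     {B \<in> support_sets U R. \<forall>C \<in> support_sets U R. C \<subseteq> B \<longrightarrow> C = B}"

definition support_indep :: "'a set \<Rightarrow> ('a \<times> 'a) set \<Rightarrow> 'a set set" where
  "support_indep U R = {I. \<exists>B \<in> minimal_support_sets U R. I \<subseteq> B}"

definition support_rank :: "'a set \<Rightarrow> ('a \<times> 'a) set \<Rightarrow> 'a set \<Rightarrow> nat" where
  "support_rank U R X = Max {card I | I. I \<subseteq> X \<and> I \<in> support_indep U R}"

definition support_cl :: "'a set \<Rightarrow> ('a \<times> 'a) set \<Rightarrow> 'a set \<Rightarrow> 'a set" where
  "support_cl U R X = {e \<in> U. support_rank U R X = support_rank U R (insert e X)}"

definition support_closed :: "'a set \<Rightarrow> ('a \<times> 'a) set \<Rightarrow> 'a set \<Rightarrow> bool" where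
  "support_closed U R X \<longleftrightarrow> support_cl U R X = X"

end

theory Submission
  imports Defs
begin

text \<open>For an equivalence R the upper approximation of X is the saturation R``X, the minimal
support sets are the transversals of the partition U//R, and the independent sets are the
partial transversals. Hence the rank of X is the number of classes X meets, and adding e to X
keeps the rank exactly when the class of e already meets X: the closure of X is R``X. Since
R_*(X) \<subseteq> X \<subseteq> R``X, and R``X = X forces R_*(X) = X, X is closed iff R^*(X) = R_*(X).\<close>

lemma obtain_inj_on_subset_same_image:
  obtains B where "B \<subseteq> A" "inj_on f B" "f ` B = f ` A"
proof
  let ?B = "inv_into A f ` f ` A"
  show "?B \<subseteq> A"
    by (auto intro: inv_into_into)
  show "f ` ?B = f ` A"
    by (force simp: f_inv_into_f image_image)
  show "inj_on f ?B"
    by (rule inj_onI) (auto simp: f_inv_into_f)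
qed

context
  fixes U :: "'a set" and R :: "('a \<times> 'a) set"
  assumes equiv: "equiv U R"
begin

lemma RN_equiv: "RN U R x = R `` {x}"
  using equiv unfolding RN_def equiv_def refl_on_def by auto

lemma upper_appr_equiv: "upper_appr U R X = R `` X"
  using equiv unfolding upper_appr_def RN_equiv equiv_def refl_on_def sym_def by blast

lemma lower_appr_subset: "lower_appr U R X \<subseteq> X"
  using equiv_class_self[OF equiv] unfolding lower_appr_def RN_equiv by blast

lemma upper_eq_lower_appr_iff:
  assumes "X \<subseteq> U"
  shows "upper_appr U R X = lower_appr U R X \<longleftrightarrow> R `` X = X"
proof -
  have "X \<subseteq> R `` X"
    using assms equiv_class_self[OF equiv] by blast
  moreover have "lower_appr U R X = X" if "R `` X = X"
    using that assms lower_appr_subset unfolding lower_appr_def RN_equiv by blast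
  ultimately show ?thesis
    using lower_appr_subset unfolding upper_appr_equiv by blast
qed

lemma support_sets_equiv: "B \<in> support_sets U R \<longleftrightarrow> B \<subseteq> U \<and> R `` B = U"
  unfolding support_sets_def upper_appr_equiv by simp

lemma minimal_support_sets_equiv:
  "B \<in> minimal_support_sets U R \<longleftrightarrow> B \<subseteq> U \<and> R `` B = U \<and> inj_on (\<lambda>x. R `` {x}) B"
proof
  assume B: "B \<in> minimal_support_sets U R"
  then have "B \<subseteq> U" "R `` B = U"
    unfolding minimal_support_sets_def support_sets_equiv by auto
  moreover have "inj_on (\<lambda>x. R `` {x}) B"
  proof (rule inj_onI, rule ccontr)
    fix x y
    assume xy: "x \<in> B" "y \<in> B" "R `` {x} = R `` {y}" "x \<noteq> y"
    then have "R `` {y} \<subseteq> R `` (B - {y})"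
      unfolding xy(3)[symmetric] by (intro Image_mono) auto
    moreover have "R `` B = R `` (B - {y}) \<union> R `` {y}"
      using xy(2) by blast
    ultimately have "R `` (B - {y}) = R `` B"
      by blast
    then have "B - {y} \<in> support_sets U R"
      using \<open>B \<subseteq> U\<close> \<open>R `` B = U\<close> unfolding support_sets_equiv by auto
    then have "B - {y} = B"
      using B unfolding minimal_support_sets_def by blast
    with xy show False
      by blast
  qed
  ultimately show "B \<subseteq> U \<and> R `` B = U \<and> inj_on (\<lambda>x. R `` {x}) B"
    by blast
next
  assume "B \<subseteq> U \<and> R `` B = U \<and> inj_on (\<lambda>x. R `` {x}) B"
  then have B: "B \<subseteq> U" "R `` B = U" and inj: "inj_on (\<lambda>x. R `` {x}) B"
    by auto
  have "C = B" if C: "C \<in> support_sets U R" "C \<subseteq> B" for C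
  proof
    show "B \<subseteq> C"
    proof
      fix x
      assume "x \<in> B"
      then obtain c where "c \<in> C" "(c, x) \<in> R"
        using B C unfolding support_sets_equiv by blast
      then have "R `` {c} = R `` {x}"
        using equiv by (simp add: equiv_class_eq_iff)
      then have "c = x"
        using inj \<open>c \<in> C\<close> \<open>x \<in> B\<close> C(2) by (auto dest: inj_onD)
      with \<open>c \<in> C\<close> show "x \<in> C"
        by simp
    qed
  qed (use C in simp)
  moreover have "B \<in> support_sets U R"
    using B by (simp add: support_sets_equiv)
  ultimately show "B \<in> minimal_support_sets U R"
    unfolding minimal_support_sets_def by blast
qed

lemma support_indep_equiv:
  "I \<in> support_indep U R \<longleftrightarrow> I \<subseteq> U \<and> inj_on (\<lambda>x. R `` {x}) I"
proof
  assume "I \<in> support_indep U R"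
  then obtain B where "B \<in> minimal_support_sets U R" "I \<subseteq> B"
    unfolding support_indep_def by blast
  moreover from this(1) have "B \<subseteq> U" "inj_on (\<lambda>x. R `` {x}) B"
    by (simp_all add: minimal_support_sets_equiv)
  ultimately show "I \<subseteq> U \<and> inj_on (\<lambda>x. R `` {x}) I"
    using inj_on_subset[of _ B I] by blast
next
  assume I: "I \<subseteq> U \<and> inj_on (\<lambda>x. R `` {x}) I"
  \<comment> \<open>complete I by one representative of every class that I misses\<close>
  obtain B where B: "B \<subseteq> U - R `` I" "inj_on (\<lambda>x. R `` {x}) B"
    and same_classes: "(\<lambda>x. R `` {x}) ` B = (\<lambda>x. R `` {x}) ` (U - R `` I)"
    by (rule obtain_inj_on_subset_same_image)
  have "U - R `` I \<subseteq> R `` (U - R `` I)"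
    using equiv_class_self[OF equiv] by blast
  also have "\<dots> = R `` B"
    unfolding Image_eq_UN[of R B] Image_eq_UN[of R "U - R `` I"] same_classes ..
  finally have "U \<subseteq> R `` (I \<union> B)"
    by blast
  moreover have "R `` (I \<union> B) \<subseteq> U"
    using equiv_type[OF equiv] by blast
  ultimately have "R `` (I \<union> B) = U"
    by blast
  moreover have "(\<lambda>x. R `` {x}) ` (I - B) \<inter> (\<lambda>x. R `` {x}) ` (B - I) = {}"
    using B(1) equiv_class_self[OF equiv] by blast
  then have "inj_on (\<lambda>x. R `` {x}) (I \<union> B)"
    using I B(2) by (simp add: inj_on_Un)
  moreover have "I \<union> B \<subseteq> U"
    using I B(1) by blast
  ultimately have "I \<union> B \<in> minimal_support_sets U R"
    by (simp add: minimal_support_sets_equiv)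
  then show "I \<in> support_indep U R"
    unfolding support_indep_def by blast
qed

lemma support_rank_equiv:
  assumes "finite U" and "Y \<subseteq> U"
  shows "support_rank U R Y = card ((\<lambda>x. R `` {x}) ` Y)"
proof -
  let ?cls = "\<lambda>x. R `` {x}"
  let ?S = "{card I | I. I \<subseteq> Y \<and> I \<in> support_indep U R}"
  have "finite Y"
    using assms finite_subset by blast
  have bounded: "n \<le> card (?cls ` Y)" if "n \<in> ?S" for n
  proof -
    obtain I where I: "n = card I" "I \<subseteq> Y" "inj_on ?cls I"
      using \<open>n \<in> ?S\<close> support_indep_equiv by blast
    then have "n = card (?cls ` I)"
      by (simp add: card_image)
    also have "\<dots> \<le> card (?cls ` Y)"
      using I(2) \<open>finite Y\<close> by (intro card_mono) auto
    finally show ?thesis .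
  qed
  obtain I where I: "I \<subseteq> Y" "inj_on ?cls I" "?cls ` I = ?cls ` Y"
    using obtain_inj_on_subset_same_image[where A = Y and f = ?cls] by blast
  have "I \<in> support_indep U R"
    using I(1,2) assms(2) support_indep_equiv by blast
  moreover have "card I = card (?cls ` Y)"
    using I(2,3) card_image by metis
  ultimately have attained: "card (?cls ` Y) \<in> ?S"
    using I(1) by (intro CollectI exI[of _ I]) simp
  have "?S \<subseteq> {..card (?cls ` Y)}"
    using bounded by blast
  then have "finite ?S"
    using finite_subset by blast
  then show ?thesis
    unfolding support_rank_def using bounded attained by (intro Max_eqI)
qed

lemma support_cl_equiv:
  assumes "finite U" and "X \<subseteq> U"
  shows "support_cl U R X = R `` X"
proof (rule set_eqI)
  fix e
  let ?classes = "(\<lambda>x. R `` {x}) ` X"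
  have "finite ?classes"
    using assms finite_subset by blast
  have "support_rank U R X = support_rank U R (insert e X) \<longleftrightarrow> R `` {e} \<in> ?classes"
    if "e \<in> U"
    using that assms \<open>finite ?classes\<close>
    by (simp add: support_rank_equiv card_insert_if)
  then have "e \<in> support_cl U R X \<longleftrightarrow> e \<in> U \<and> R `` {e} \<in> ?classes"
    by (auto simp: support_cl_def)
  also have "\<dots> \<longleftrightarrow> e \<in> R `` X"
  proof
    assume "e \<in> U \<and> R `` {e} \<in> ?classes"
    then obtain x where "x \<in> X" "R `` {x} = R `` {e}" "e \<in> U"
      by auto
    then have "(x, e) \<in> R"
      using assms(2) eq_equiv_class_iff[OF equiv] by blast
    with \<open>x \<in> X\<close> show "e \<in> R `` X"
      by blast
  next
    assume "e \<in> R `` X"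
    then obtain x where "x \<in> X" "(x, e) \<in> R"
      by blast
    then show "e \<in> U \<and> R `` {e} \<in> ?classes"
      using equiv_class_eq_iff[OF equiv] by (metis image_eqI)
  qed
  finally show "e \<in> support_cl U R X \<longleftrightarrow> e \<in> R `` X" .
qed

end

theorem corollary3:
  fixes U :: "'a set" and R :: "('a \<times> 'a) set" and X :: "'a set"
  assumes "finite U" and "U \<noteq> {}" and "equiv U R" and "X \<subseteq> U"
  shows "support_closed U R X \<longleftrightarrow> upper_appr U R X = lower_appr U R X"
proof -
  have "support_closed U R X \<longleftrightarrow> R `` X = X"
    unfolding support_closed_def support_cl_equiv[OF assms(3,1,4)] ..
  also have "\<dots> \<longleftrightarrow> upper_appr U R X = lower_appr U R X"
    using upper_eq_lower_appr_iff[OF assms(3,4)] by simp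
  finally show ?thesis .
qed

end
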